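(* Let $f=f_1+f_2$ and $l=l_1+l_2$ be as in the context and assume there are $C\ge0$, $C_1\ge0$, $C_2,C_3>0$ such that for all $x\in H$, $\mu\in\mathcal P_2(H)$, $q\in\tilde\Lambda$: $|f_2(x,\mu,q)|\le C(1+|q|_\Lambda)$ and $-C_1+C_2|q|_\Lambda^2\le l_2(x,\mu,q)\le C_1+C_3|q|_\Lambda^2$ (and $|f(x,\mu,q)|_{-1}\le C(1+|x|_{-1}+\mathcal M_{-1,r}^{1/r}(\mu)+|q|_\Lambda)$ for a fixed $r\in[1,2)$). Then for every $\tilde C>0$ there is a constant $K>0$ such that $$\mathcal H_n(\mathbf x,\mu,\mathbf p)=\mathcal H_n^{K\sqrt n}(\mathbf x,\mu,\mathbf p)$$ for all $n\in\mathbb N$, $\mu\in\mathcal P_2(H)$ and $\mathbf x,\mathbf p\in H^n$ with $|\mathbf p|_{H^n}\le\tilde C/\sqrt n$.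
   Context: $H,\Lambda$ real separable Hilbert spaces ($H$: inner product $\langle\cdot,\cdot\rangle$, norm $|\cdot|$; $\Lambda$: norm $|\cdot|_\Lambda$), $\tilde\Lambda\subset\Lambda$ convex. $B\in L(H)$ self-adjoint, strictly positive, $|x|_{-1}^2=\langle Bx,x\rangle$; $\mathcal P_2(H)$ probability measures with finite second moment; $\mathcal M_{-1,r}(\mu)=\int|x|_{-1}^r\mu(dx)$. $f=f_1+f_2$ with $f_1:H\times\mathcal P_2(H)\to H$, $f_2:H\times\mathcal P_2(H)\times\Lambda\to H$; $l=l_1+l_2$ with $l_1:H\times\mathcal P_2(H)\to\mathbb R$, $l_2:H\times\mathcal P_2(H)\times\Lambda\to\mathbb R$ continuous. For $\mathbf x,\mathbf p\in H^n$, $|\mathbf p|_{H^n}=(\sum|p_i|^2)^{1/2}$, $\mathbf q\in\tilde\Lambda^n$, $|\mathbf q|_{\Lambda^n}=(\sum|q_i|_\Lambda^2)^{1/2}$, and $\mathcal H_n(\mathbf x,\mu,\mathbf p)=\frac1n\inf_{\mathbf q\in\tilde\Lambda^n}\sum_{i=1}^n(\langle f(x_i,\mu,q_i),np_i\rangle+l(x_i,\mu,q_i))$, $\mathcal H_n^m(\mathbf x,\mu,\mathbf p)=\frac1n\inf_{\mathbf q\in\tilde\Lambda^n,|\mathbf q|_{\Lambda^n}\le m}\sum_{i=1}^n(\langle f(x_i,\mu,q_i),np_i\rangle+l(x_i,\mu,q_i))$ for $m>0$. *)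

theory Defs
  imports "HOL-Probability.Probability"
begin

definition P2 :: "'h::{real_inner,polish_space} measure set" where
  "P2 = {\<mu>. sets \<mu> = sets borel \<and> prob_space \<mu> \<and> integrable \<mu> (\<lambda>x. (norm x)\<^sup>2)}"

definition admissible_B :: "('h::real_inner \<Rightarrow> 'h) \<Rightarrow> bool" where
  "admissible_B B \<longleftrightarrow> bounded_linear B \<and> (\<forall>x y. inner (B x) y = inner x (B y))
     \<and> (\<forall>x. x \<noteq> 0 \<longrightarrow> inner (B x) x > 0)"

definition norm_m1 :: "('h::real_inner \<Rightarrow> 'h) \<Rightarrow> 'h \<Rightarrow> real" where
  "norm_m1 B x = sqrt (inner (B x) x)"

definition M_m1 :: "('h::{real_inner,polish_space} \<Rightarrow> 'h) \<Rightarrow> real \<Rightarrow> 'h measure \<Rightarrow> real" where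
  "M_m1 B r \<mu> = (\<integral>x. (norm_m1 B x) powr r \<partial>\<mu>)"

text \<open>Vectors in H^n / Lambda^n are functions on indices i < n.\<close>
definition Hn :: "('h::real_inner \<Rightarrow> 'm \<Rightarrow> 'l::real_inner \<Rightarrow> 'h) \<Rightarrow> ('h \<Rightarrow> 'm \<Rightarrow> 'l \<Rightarrow> real)
     \<Rightarrow> 'l set \<Rightarrow> nat \<Rightarrow> (nat \<Rightarrow> 'h) \<Rightarrow> 'm \<Rightarrow> (nat \<Rightarrow> 'h) \<Rightarrow> real" where
  "Hn f l Lt n x \<mu> p = (1 / real n) * Inf {(\<Sum>i<n. inner (f (x i) \<mu> (q i)) (real n *\<^sub>R p i) + l (x i) \<mu> (q i))
       | q. \<forall>i<n. q i \<in> Lt}"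

definition Hn_m :: "('h::real_inner \<Rightarrow> 'm \<Rightarrow> 'l::real_inner \<Rightarrow> 'h) \<Rightarrow> ('h \<Rightarrow> 'm \<Rightarrow> 'l \<Rightarrow> real)
     \<Rightarrow> 'l set \<Rightarrow> real \<Rightarrow> nat \<Rightarrow> (nat \<Rightarrow> 'h) \<Rightarrow> 'm \<Rightarrow> (nat \<Rightarrow> 'h) \<Rightarrow> real" where
  "Hn_m f l Lt m n x \<mu> p = (1 / real n) * Inf {(\<Sum>i<n. inner (f (x i) \<mu> (q i)) (real n *\<^sub>R p i) + l (x i) \<mu> (q i))
       | q. (\<forall>i<n. q i \<in> Lt) \<and> sqrt (\<Sum>i<n. (norm (q i))\<^sup>2) \<le> m}"

end

theory Submission
  imports Defs
begin

(* Write the objective of H_n as a control-independent part plus the contribution of f2 and l2.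
   Since |p| <= Ct/sqrt n, the pairing with n p costs at most C Ct sqrt n (sqrt n + |q|), while l2
   contributes at least C2 |q|^2 - n C1; so the objective is bounded below, and once |q| > K sqrt n
   it is no smaller than the objective of a constant control q_i = q0, which lies in the ball of
   radius K sqrt n and costs O(n). Hence the infimum may be taken over that ball. *)

lemma cInf_image_restrict_if_dominated:
  fixes F :: "'a \<Rightarrow> 'b::conditionally_complete_lattice"
  assumes dominated: "\<And>q. q \<in> Q \<Longrightarrow> \<not> P q \<Longrightarrow> \<exists>q'\<in>Q. P q' \<and> F q' \<le> F q"
    and bdd: "bdd_below (F ` {q\<in>Q. P q})"
  shows "Inf (F ` Q) = Inf (F ` {q\<in>Q. P q})"
proof (cases "{q\<in>Q. P q} = {}")
  case True
  with dominated have "Q = {}" by blast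
  then show ?thesis by simp
next
  case False
  have below: "Inf (F ` {q\<in>Q. P q}) \<le> F q" if "q \<in> Q" for q
  proof (cases "P q")
    case True
    with that bdd show ?thesis by (auto intro: cInf_lower)
  next
    case False
    with that dominated obtain q' where "q' \<in> Q" "P q'" "F q' \<le> F q" by blast
    with bdd have "Inf (F ` {q\<in>Q. P q}) \<le> F q'" by (auto intro: cInf_lower)
    then show ?thesis using \<open>F q' \<le> F q\<close> by (rule order_trans)
  qed
  show ?thesis
  proof (rule antisym)
    show "Inf (F ` Q) \<le> Inf (F ` {q\<in>Q. P q})"
      using False below by (intro cInf_superset_mono bdd_belowI2) auto
    show "Inf (F ` {q\<in>Q. P q}) \<le> Inf (F ` Q)"
      using False below by (intro cInf_greatest) auto
  qed
qed

lemma sum_abs_le_sqrt_card_mult_L2_set: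
  "(\<Sum>i\<in>A. \<bar>g i\<bar>) \<le> sqrt (real (card A)) * L2_set g A"
  using L2_set_mult_ineq[of "\<lambda>_. 1" g A] by (simp add: L2_set_constant)

lemma quadratic_ge_vertex_value:
  fixes b c R :: real
  assumes "0 < c"
  shows "- b\<^sup>2 / (4 * c) \<le> c * R\<^sup>2 - b * R"
proof -
  have "0 \<le> (2 * c * R - b)\<^sup>2 / (4 * c)" using assms by simp
  also have "\<dots> = c * R\<^sup>2 - b * R + b\<^sup>2 / (4 * c)"
    using assms by (simp add: field_simps power2_eq_square)
  finally show ?thesis by simp
qed

lemma quadratic_dominates_beyond_radius:
  fixes s R K b c A :: real
  assumes "0 < s" "0 < c" "0 \<le> A" "1 \<le> K" "(b + A) / c \<le> K" "K * s < R"
  shows "s\<^sup>2 * A \<le> c * R\<^sup>2 - b * s * R"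
proof -
  define t where "t = R / s"
  have R: "R = t * s" using assms(1) by (simp add: t_def)
  have "K < t" using assms(1,6) by (simp add: R)
  have "b + A \<le> c * K" using assms(2,5) by (simp add: pos_divide_le_eq mult.commute)
  also have "\<dots> \<le> c * t" using \<open>K < t\<close> assms(2) by simp
  finally have "A \<le> c * t - b" by simp
  have "1 \<le> t" using \<open>K < t\<close> assms(4) by simp
  have "s\<^sup>2 * A \<le> s\<^sup>2 * (t * A)"
    using mult_right_mono[OF \<open>1 \<le> t\<close> assms(3)] by (simp add: mult_left_mono)
  also have "\<dots> \<le> s\<^sup>2 * (t * (c * t - b))"
    using \<open>A \<le> c * t - b\<close> \<open>1 \<le> t\<close> by (simp add: mult_left_mono)
  also have "\<dots> = c * R\<^sup>2 - b * s * R" by (simp add: R power2_eq_square algebra_simps)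
  finally show ?thesis .
qed

definition Hn_objective :: "('h::real_inner \<Rightarrow> 'm \<Rightarrow> 'l \<Rightarrow> 'h) \<Rightarrow> ('h \<Rightarrow> 'm \<Rightarrow> 'l \<Rightarrow> real)
    \<Rightarrow> nat \<Rightarrow> (nat \<Rightarrow> 'h) \<Rightarrow> 'm \<Rightarrow> (nat \<Rightarrow> 'h) \<Rightarrow> (nat \<Rightarrow> 'l) \<Rightarrow> real" where
  "Hn_objective f l n x \<mu> p q = (\<Sum>i<n. inner (f (x i) \<mu> (q i)) (real n *\<^sub>R p i) + l (x i) \<mu> (q i))"

lemma Hn_eq_Hn_m_if_dominated:
  fixes f2 :: "'h::real_inner \<Rightarrow> 'm \<Rightarrow> 'l::real_inner \<Rightarrow> 'h" and l2 :: "'h \<Rightarrow> 'm \<Rightarrow> 'l \<Rightarrow> real"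
    and n :: nat and x p :: "nat \<Rightarrow> 'h" and \<mu> :: 'm
  defines "J \<equiv> Hn_objective f2 l2 n x \<mu> p"
  assumes dominated: "\<And>q. \<forall>i<n. q i \<in> Lt \<Longrightarrow> m < L2_set (\<lambda>i. norm (q i)) {..<n} \<Longrightarrow>
      \<exists>q'. (\<forall>i<n. q' i \<in> Lt) \<and> L2_set (\<lambda>i. norm (q' i)) {..<n} \<le> m \<and> J q' \<le> J q"
    and bdd: "bdd_below (J ` {q. \<forall>i<n. q i \<in> Lt})"
  shows "Hn (\<lambda>x \<mu> q. f1 x \<mu> + f2 x \<mu> q) (\<lambda>x \<mu> q. l1 x \<mu> + l2 x \<mu> q) Lt n x \<mu> p
       = Hn_m (\<lambda>x \<mu> q. f1 x \<mu> + f2 x \<mu> q) (\<lambda>x \<mu> q. l1 x \<mu> + l2 x \<mu> q) Lt m n x \<mu> p"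
proof -
  define a where "a = (\<Sum>i<n. inner (f1 (x i) \<mu>) (real n *\<^sub>R p i) + l1 (x i) \<mu>)"
  have objective: "(\<Sum>i<n. inner (f1 (x i) \<mu> + f2 (x i) \<mu> (q i)) (real n *\<^sub>R p i)
      + (l1 (x i) \<mu> + l2 (x i) \<mu> (q i))) = a + J q" for q
    unfolding a_def J_def Hn_objective_def by (simp add: inner_add_left sum.distrib algebra_simps)
  have "Inf ((\<lambda>q. a + J q) ` {q. \<forall>i<n. q i \<in> Lt})
      = Inf ((\<lambda>q. a + J q) ` {q \<in> {q. \<forall>i<n. q i \<in> Lt}. L2_set (\<lambda>i. norm (q i)) {..<n} \<le> m})"
  proof (rule cInf_image_restrict_if_dominated)
    show "\<exists>q'\<in>{q. \<forall>i<n. q i \<in> Lt}. L2_set (\<lambda>i. norm (q' i)) {..<n} \<le> m \<and> a + J q' \<le> a + J q"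
      if "q \<in> {q. \<forall>i<n. q i \<in> Lt}" "\<not> L2_set (\<lambda>i. norm (q i)) {..<n} \<le> m" for q
      using dominated that by fastforce
    from bdd obtain b where "\<And>q. \<forall>i<n. q i \<in> Lt \<Longrightarrow> b \<le> J q"
      by (auto simp: bdd_below_def)
    then show "bdd_below ((\<lambda>q. a + J q) ` {q \<in> {q. \<forall>i<n. q i \<in> Lt}. L2_set (\<lambda>i. norm (q i)) {..<n} \<le> m})"
      by (intro bdd_belowI2[where m = "a + b"]) auto
  qed
  then show ?thesis
    unfolding Hn_def Hn_m_def objective L2_set_def by (simp add: setcompr_eq_image)
qed

lemma Hn_eq_Hn_m_no_controls:
  assumes "Lt = {}" "0 < n"
  shows "Hn f l Lt n x \<mu> p = Hn_m f l Lt m n x \<mu> p"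
proof -
  have "\<not> (\<forall>i<n. q i \<in> Lt)" for q using assms by auto
  then have "{F q | q. \<forall>i<n. q i \<in> Lt} = {}" "{F q | q. (\<forall>i<n. q i \<in> Lt) \<and> P q} = {}"
    for F :: "_ \<Rightarrow> real" and P by blast+
  then show ?thesis unfolding Hn_def Hn_m_def by (simp only:)
qed

locale linear_quadratic_growth =
  fixes f :: "'h::real_inner \<Rightarrow> 'm \<Rightarrow> 'l::real_inner \<Rightarrow> 'h" and l :: "'h \<Rightarrow> 'm \<Rightarrow> 'l \<Rightarrow> real"
    and Lt :: "'l set" and M :: "'m set" and C C1 C2 C3 :: real
  assumes constants: "C \<ge> 0" "C1 \<ge> 0" "C2 > 0" "C3 \<ge> 0"
    and f_growth: "\<And>y \<mu> q. \<mu> \<in> M \<Longrightarrow> q \<in> Lt \<Longrightarrow> norm (f y \<mu> q) \<le> C * (1 + norm q)"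
    and l_lower: "\<And>y \<mu> q. \<mu> \<in> M \<Longrightarrow> q \<in> Lt \<Longrightarrow> - C1 + C2 * (norm q)\<^sup>2 \<le> l y \<mu> q"
    and l_upper: "\<And>y \<mu> q. \<mu> \<in> M \<Longrightarrow> q \<in> Lt \<Longrightarrow> l y \<mu> q \<le> C1 + C3 * (norm q)\<^sup>2"
begin

lemma abs_inner_f_le:
  assumes "\<mu> \<in> M" "q \<in> Lt"
  shows "\<bar>inner (f y \<mu> q) v\<bar> \<le> C * (1 + norm q) * norm v"
  using Cauchy_Schwarz_ineq2 mult_right_mono[OF f_growth[OF assms] norm_ge_zero] by (rule order_trans)

lemma Hn_objective_lower_bound:
  assumes \<mu>: "\<mu> \<in> M" and q: "\<forall>i<n. q i \<in> Lt"
    and p: "sqrt (real n) * L2_set (\<lambda>i. norm (p i)) {..<n} \<le> Ct"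
  defines "R \<equiv> L2_set (\<lambda>i. norm (q i)) {..<n}"
  shows "C2 * R\<^sup>2 - C * Ct * sqrt (real n) * (sqrt (real n) + R) - real n * C1
    \<le> Hn_objective f l n x \<mu> p q"
proof -
  define P where "P = L2_set (\<lambda>i. norm (p i)) {..<n}"
  define S where "S = (\<Sum>i<n. norm (p i) + norm (q i) * norm (p i))"
  have "S \<le> sqrt (real n) * P + R * P"
    using sum_abs_le_sqrt_card_mult_L2_set[of "\<lambda>i. norm (p i)" "{..<n}"]
      L2_set_mult_ineq[of "\<lambda>i. norm (q i)" "\<lambda>i. norm (p i)" "{..<n}"]
    by (simp add: S_def P_def R_def sum.distrib)
  then have "real n * S \<le> real n * (sqrt (real n) * P + R * P)"
    by (rule mult_left_mono) simp
  also have "\<dots> = sqrt (real n) * (sqrt (real n) + R) * (sqrt (real n) * P)"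
    by (simp add: algebra_simps flip: power2_eq_square)
  also have "\<dots> \<le> sqrt (real n) * (sqrt (real n) + R) * Ct"
    using p by (intro mult_left_mono) (auto simp: P_def R_def)
  finally have "real n * S \<le> sqrt (real n) * (sqrt (real n) + R) * Ct" .
  from mult_left_mono[OF this constants(1)]
  have "C * (real n * S) \<le> C * Ct * sqrt (real n) * (sqrt (real n) + R)"
    by (simp add: ac_simps)
  moreover have "C2 * R\<^sup>2 - C * (real n * S) - real n * C1
      = (\<Sum>i<n. C2 * (norm (q i))\<^sup>2 - C * real n * (norm (p i) + norm (q i) * norm (p i)) - C1)"
    unfolding S_def R_def L2_set_def
    by (simp add: sum_nonneg sum_subtractf sum_distrib_left mult.assoc)
  moreover have "\<dots> \<le> Hn_objective f l n x \<mu> p q"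
    unfolding Hn_objective_def
  proof (rule sum_mono)
    fix i assume "i \<in> {..<n}"
    with q have "q i \<in> Lt" by simp
    have "- (C * real n * (norm (p i) + norm (q i) * norm (p i))) \<le> inner (f (x i) \<mu> (q i)) (real n *\<^sub>R p i)"
      using abs_inner_f_le[OF \<mu> \<open>q i \<in> Lt\<close>, of "x i" "real n *\<^sub>R p i"]
      by (simp add: abs_le_iff algebra_simps)
    with l_lower[OF \<mu> \<open>q i \<in> Lt\<close>, of "x i"]
    show "C2 * (norm (q i))\<^sup>2 - C * real n * (norm (p i) + norm (q i) * norm (p i)) - C1
        \<le> inner (f (x i) \<mu> (q i)) (real n *\<^sub>R p i) + l (x i) \<mu> (q i)"
      by linarith
  qed
  ultimately show ?thesis by linarith
qed

lemma Hn_objective_constant_upper_bound: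
  assumes \<mu>: "\<mu> \<in> M" and q0: "q0 \<in> Lt"
    and p: "sqrt (real n) * L2_set (\<lambda>i. norm (p i)) {..<n} \<le> Ct"
  shows "Hn_objective f l n x \<mu> p (\<lambda>_. q0) \<le> real n * (C * Ct * (1 + norm q0) + C1 + C3 * (norm q0)\<^sup>2)"
proof -
  have "Hn_objective f l n x \<mu> p (\<lambda>_. q0)
      \<le> (\<Sum>i<n. C * (1 + norm q0) * real n * norm (p i) + (C1 + C3 * (norm q0)\<^sup>2))"
    unfolding Hn_objective_def
  proof (rule sum_mono)
    fix i
    have "inner (f (x i) \<mu> q0) (real n *\<^sub>R p i) \<le> C * (1 + norm q0) * real n * norm (p i)"
      using abs_inner_f_le[OF \<mu> q0, of "x i" "real n *\<^sub>R p i"] by (simp add: abs_le_iff)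
    with l_upper[OF \<mu> q0, of "x i"]
    show "inner (f (x i) \<mu> q0) (real n *\<^sub>R p i) + l (x i) \<mu> q0
        \<le> C * (1 + norm q0) * real n * norm (p i) + (C1 + C3 * (norm q0)\<^sup>2)"
      by linarith
  qed
  also have "\<dots> = C * (1 + norm q0) * (real n * (\<Sum>i<n. norm (p i))) + real n * (C1 + C3 * (norm q0)\<^sup>2)"
    by (simp add: sum.distrib sum_distrib_left mult.assoc)
  also have "\<dots> \<le> C * (1 + norm q0) * (real n * Ct) + real n * (C1 + C3 * (norm q0)\<^sup>2)"
  proof -
    have "(\<Sum>i<n. norm (p i)) \<le> Ct"
      using sum_abs_le_sqrt_card_mult_L2_set[of "\<lambda>i. norm (p i)" "{..<n}"] p by simp
    then show ?thesis
      using constants(1) by (intro add_right_mono mult_left_mono) auto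
  qed
  finally show ?thesis by (simp add: algebra_simps)
qed

lemma Hn_objective_bdd_below:
  assumes \<mu>: "\<mu> \<in> M" and p: "sqrt (real n) * L2_set (\<lambda>i. norm (p i)) {..<n} \<le> Ct"
  shows "bdd_below (Hn_objective f l n x \<mu> p ` {q. \<forall>i<n. q i \<in> Lt})"
proof -
  define b where "b = C * Ct * sqrt (real n)"
  have "- b\<^sup>2 / (4 * C2) - b * sqrt (real n) - real n * C1 \<le> Hn_objective f l n x \<mu> p q"
    if "q \<in> {q. \<forall>i<n. q i \<in> Lt}" for q
  proof -
    define R where "R = L2_set (\<lambda>i. norm (q i)) {..<n}"
    have "- b\<^sup>2 / (4 * C2) \<le> C2 * R\<^sup>2 - b * R"
      by (rule quadratic_ge_vertex_value[OF constants(3)])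
    moreover have "C2 * R\<^sup>2 - b * R - b * sqrt (real n) - real n * C1 \<le> Hn_objective f l n x \<mu> p q"
      using Hn_objective_lower_bound[OF \<mu> _ p] that by (simp add: b_def R_def algebra_simps)
    ultimately show ?thesis by linarith
  qed
  then show ?thesis by (rule bdd_belowI2)
qed

(* Large enough that C2 |q|^2 beats the linear terms and the cost of the constant control q0
   as soon as |q| > K sqrt n (see quadratic_dominates_beyond_radius); K >= |q0| puts the constant
   control q0 inside the ball. *)
definition truncation_radius :: "real \<Rightarrow> 'l \<Rightarrow> real" where
  "truncation_radius Ct q0 =
     max (max 1 (norm q0)) ((C * Ct * (3 + norm q0) + 2 * C1 + C3 * (norm q0)\<^sup>2) / C2)"

lemma Hn_objective_constant_le_beyond_radius:
  assumes \<mu>: "\<mu> \<in> M" and q0: "q0 \<in> Lt" and q: "\<forall>i<n. q i \<in> Lt"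
    and p: "sqrt (real n) * L2_set (\<lambda>i. norm (p i)) {..<n} \<le> Ct"
    and large: "truncation_radius Ct q0 * sqrt (real n) < L2_set (\<lambda>i. norm (q i)) {..<n}"
  shows "Hn_objective f l n x \<mu> p (\<lambda>_. q0) \<le> Hn_objective f l n x \<mu> p q"
proof -
  define K where "K = truncation_radius Ct q0"
  define R where "R = L2_set (\<lambda>i. norm (q i)) {..<n}"
  define A where "A = C * Ct * (2 + norm q0) + 2 * C1 + C3 * (norm q0)\<^sup>2"
  have "n \<noteq> 0" using large by (cases n) simp_all
  have "0 \<le> sqrt (real n) * L2_set (\<lambda>i. norm (p i)) {..<n}" by simp
  with p have "0 \<le> Ct" by linarith
  then have "0 \<le> A" using constants by (simp add: A_def)
  have K: "1 \<le> K" "(C * Ct + A) / C2 \<le> K"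
    unfolding K_def truncation_radius_def A_def by (auto simp: algebra_simps)
  have "(sqrt (real n))\<^sup>2 * A \<le> C2 * R\<^sup>2 - C * Ct * sqrt (real n) * R"
    using quadratic_dominates_beyond_radius[OF _ constants(3) \<open>0 \<le> A\<close> K, of "sqrt (real n)" R]
      \<open>n \<noteq> 0\<close> large
    by (simp add: K_def R_def)
  then have "real n * (C * Ct * (1 + norm q0) + C1 + C3 * (norm q0)\<^sup>2)
      \<le> C2 * R\<^sup>2 - C * Ct * sqrt (real n) * (sqrt (real n) + R) - real n * C1"
    by (simp add: A_def algebra_simps)
  then show ?thesis
    using Hn_objective_lower_bound[OF \<mu> q p] Hn_objective_constant_upper_bound[OF \<mu> q0 p]
    unfolding R_def by (meson order_trans)
qed

lemma Hn_eq_Hn_m_truncation_radius: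
  assumes \<mu>: "\<mu> \<in> M" and q0: "q0 \<in> Lt"
    and p: "sqrt (real n) * L2_set (\<lambda>i. norm (p i)) {..<n} \<le> Ct"
  shows "Hn (\<lambda>x \<mu> q. f1 x \<mu> + f x \<mu> q) (\<lambda>x \<mu> q. l1 x \<mu> + l x \<mu> q) Lt n x \<mu> p
    = Hn_m (\<lambda>x \<mu> q. f1 x \<mu> + f x \<mu> q) (\<lambda>x \<mu> q. l1 x \<mu> + l x \<mu> q) Lt
        (truncation_radius Ct q0 * sqrt (real n)) n x \<mu> p"
proof (rule Hn_eq_Hn_m_if_dominated)
  have "norm q0 \<le> truncation_radius Ct q0" by (simp add: truncation_radius_def)
  from mult_right_mono[OF this, of "sqrt (real n)"]
  have "L2_set (\<lambda>i. norm q0) {..<n} \<le> truncation_radius Ct q0 * sqrt (real n)"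
    by (simp add: L2_set_constant ac_simps)
  then show "\<exists>q'. (\<forall>i<n. q' i \<in> Lt) \<and> L2_set (\<lambda>i. norm (q' i)) {..<n} \<le> truncation_radius Ct q0 * sqrt (real n)
      \<and> Hn_objective f l n x \<mu> p q' \<le> Hn_objective f l n x \<mu> p q"
    if "\<forall>i<n. q i \<in> Lt" "truncation_radius Ct q0 * sqrt (real n) < L2_set (\<lambda>i. norm (q i)) {..<n}" for q
    using Hn_objective_constant_le_beyond_radius[OF \<mu> q0 that(1) p that(2)] q0 by auto
  show "bdd_below (Hn_objective f l n x \<mu> p ` {q. \<forall>i<n. q i \<in> Lt})"
    by (rule Hn_objective_bdd_below[OF \<mu> p])
qed

lemma Hn_eq_Hn_m_sqrt_radius_exists:
  "\<exists>K>0. \<forall>n \<mu> x p. 1 \<le> n \<longrightarrow> \<mu> \<in> M \<longrightarrow> sqrt (\<Sum>i<n. (norm (p i))\<^sup>2) \<le> Ct / sqrt (real n) \<longrightarrow>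
     Hn (\<lambda>x \<mu> q. f1 x \<mu> + f x \<mu> q) (\<lambda>x \<mu> q. l1 x \<mu> + l x \<mu> q) Lt n x \<mu> p
     = Hn_m (\<lambda>x \<mu> q. f1 x \<mu> + f x \<mu> q) (\<lambda>x \<mu> q. l1 x \<mu> + l x \<mu> q) Lt (K * sqrt (real n)) n x \<mu> p"
proof (cases "Lt = {}")
  case True
  then show ?thesis by (auto intro!: exI[of _ 1] Hn_eq_Hn_m_no_controls)
next
  case False
  then obtain q0 where q0: "q0 \<in> Lt" by blast
  have p: "sqrt (real n) * L2_set (\<lambda>i. norm (p i)) {..<n} \<le> Ct"
    if "1 \<le> n" "sqrt (\<Sum>i<n. (norm (p i))\<^sup>2) \<le> Ct / sqrt (real n)" for n and p :: "nat \<Rightarrow> 'h"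
    using that by (simp add: L2_set_def pos_le_divide_eq mult.commute)
  show ?thesis
    using Hn_eq_Hn_m_truncation_radius[OF _ q0 p]
    by (intro exI[of _ "truncation_radius Ct q0"]) (auto simp: truncation_radius_def)
qed

end

theorem lemma4p8:
  fixes B :: "'h::{real_inner,polish_space} \<Rightarrow> 'h"
    and Lt :: "'l::{real_inner,polish_space} set"
    and f1 :: "'h \<Rightarrow> 'h measure \<Rightarrow> 'h"
    and f2 :: "'h \<Rightarrow> 'h measure \<Rightarrow> 'l \<Rightarrow> 'h"
    and l1 :: "'h \<Rightarrow> 'h measure \<Rightarrow> real"
    and l2 :: "'h \<Rightarrow> 'h measure \<Rightarrow> 'l \<Rightarrow> real"
    and C C1 C2 C3 r :: real
  assumes B: "admissible_B B"
    and Lt_convex: "convex Lt"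
    and r: "1 \<le> r" "r < 2"
    and constants: "C \<ge> 0" "C1 \<ge> 0" "C2 > 0" "C3 > 0"
    and f2_bound: "\<And>x \<mu> q. \<mu> \<in> P2 \<Longrightarrow> q \<in> Lt \<Longrightarrow> norm (f2 x \<mu> q) \<le> C * (1 + norm q)"
    and l2_lower: "\<And>x \<mu> q. \<mu> \<in> P2 \<Longrightarrow> q \<in> Lt \<Longrightarrow> - C1 + C2 * (norm q)\<^sup>2 \<le> l2 x \<mu> q"
    and l2_upper: "\<And>x \<mu> q. \<mu> \<in> P2 \<Longrightarrow> q \<in> Lt \<Longrightarrow> l2 x \<mu> q \<le> C1 + C3 * (norm q)\<^sup>2"
    and f_bound: "\<And>x \<mu> q. \<mu> \<in> P2 \<Longrightarrow> q \<in> Lt \<Longrightarrow>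
        norm_m1 B (f1 x \<mu> + f2 x \<mu> q) \<le> C * (1 + norm_m1 B x + (M_m1 B r \<mu>) powr (1 / r) + norm q)"
  shows "\<forall>Ct>0. \<exists>K>0. \<forall>n::nat. \<forall>\<mu> x p. n \<ge> 1 \<longrightarrow> \<mu> \<in> P2 \<longrightarrow>
           sqrt (\<Sum>i<n. (norm (p i))\<^sup>2) \<le> Ct / sqrt (real n) \<longrightarrow>
           Hn (\<lambda>x \<mu> q. f1 x \<mu> + f2 x \<mu> q) (\<lambda>x \<mu> q. l1 x \<mu> + l2 x \<mu> q) Lt n x \<mu> p
           = Hn_m (\<lambda>x \<mu> q. f1 x \<mu> + f2 x \<mu> q) (\<lambda>x \<mu> q. l1 x \<mu> + l2 x \<mu> q) Lt (K * sqrt (real n)) n x \<mu> p"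
proof -
  interpret linear_quadratic_growth f2 l2 Lt P2 C C1 C2 C3
    using constants f2_bound l2_lower l2_upper by unfold_locales auto
  show ?thesis
    using Hn_eq_Hn_m_sqrt_radius_exists by blast
qed

end
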